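(* Let $T$ be a torus and $X$ a finite $T$-CW complex. For each $(t,x)\in\mathcal X^+\times\mathfrak t_{\mathbb C}$ we have an equality \[ L^2(S^1\wedge X_+)^{t,x}=S^1\wedge L^2X^{t,x}_+ \] of subsets of $L^2(S^1\wedge X_+)$.
   Context: $\mathbb T=\mathbb R/\mathbb Z$, $T$ torus, $\check T=\mathrm{Hom}(\mathbb T,T)$, $\mathfrak t_{\mathbb C}=\check T\otimes\mathbb C$. $\mathcal X^+=\{(t_1,t_2)\in\mathbb C^2:\mathbb Rt_1+\mathbb Rt_2=\mathbb C,\ \mathrm{Im}(t_1/t_2)>0\}$. For a $T$-space $Z$, $L^2Z=\mathrm{Map}(\mathbb T^2,Z)$ with $\mathbb T^2\times T$ acting by $((r,u)\cdot\gamma)(s)=u\cdot\gamma(s-r)$. $T(t,x)$ is the intersection of all closed subgroups $K\subset\mathbb T^2\times T$ with $(t,x)\in\mathrm{Lie}(K)\otimes\mathbb C\subset\mathbb C^2\times\mathfrak t_{\mathbb C}$, and $W^{t,x}$ denotes the $T(t,x)$-fixed subspace of a $\mathbb T^2\times T$-space $W$. $S^1$ has the trivial $T$-action, $X_+=X\sqcup\{\mathrm{pt}\}$ with $T$-fixed basepoint, and $S^1\wedge X_+$ is pointed. The set $S^1\wedge L^2X^{t,x}_+$ is regarded as a subset of $L^2(S^1\wedge X_+)$ via $[z,\gamma]\mapsto(s\mapsto[z,\gamma(s)])$, the basepoint going to the constant loop at the basepoint. *)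

theory Defs
  imports "HOL-Analysis.Analysis"
begin

text \<open>The torus T of rank n is modelled as (R/Z)^n; its elements are represented by vectors
  v :: real^'n (taken modulo the integer lattice).  Hence T-actions are maps
  act :: real^'n => 'x => 'x which are trivial on integer vectors, and closed subgroups
  of T are represented by their (closed) preimages in R^n, which contain Z^n.
  Similarly the group TT^2 x T is represented by (real x real) x real^'n modulo the lattice.
  The exponential map Lie(T) = Tcheck (x) R --> T is then v |-> v mod lattice, and
  t_C = Tcheck (x) C = complex^'n.\<close>

definition int_vec :: "real^'n \<Rightarrow> bool" where
  "int_vec v \<longleftrightarrow> (\<forall>i. v $ i \<in> \<int>)"

definition G_lattice :: "((real \<times> real) \<times> (real^'n)) set" where
  "G_lattice = {((a, b), k). a \<in> \<int> \<and> b \<in> \<int> \<and> int_vec k}"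

definition torus_space :: "'x topology \<Rightarrow> (real^'n \<Rightarrow> 'x \<Rightarrow> 'x) \<Rightarrow> bool" where
  "torus_space X act \<longleftrightarrow>
     continuous_map (prod_topology euclidean X) X (\<lambda>(v, y). act v y)
   \<and> (\<forall>y\<in>topspace X. act 0 y = y)
   \<and> (\<forall>v w. \<forall>y\<in>topspace X. act (v + w) y = act v (act w y))
   \<and> (\<forall>k. int_vec k \<longrightarrow> (\<forall>y\<in>topspace X. act k y = y))"

definition closed_subgroup_T :: "(real^'n) set \<Rightarrow> bool" where
  "closed_subgroup_T H \<longleftrightarrow> closed H \<and> {k. int_vec k} \<subseteq> H \<and> (\<forall>a\<in>H. \<forall>b\<in>H. a - b \<in> H)"

definition closed_subgroup_G :: "((real \<times> real) \<times> (real^'n)) set \<Rightarrow> bool" where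
  "closed_subgroup_G K \<longleftrightarrow> closed K \<and> G_lattice \<subseteq> K \<and> (\<forall>a\<in>K. \<forall>b\<in>K. a - b \<in> K)"

definition disk :: "nat \<Rightarrow> (nat \<Rightarrow> real) set" where
  "disk n = {d. (\<forall>i\<ge>n. d i = 0) \<and> (\<Sum>i<n. (d i)\<^sup>2) \<le> 1}"

definition open_disk :: "nat \<Rightarrow> (nat \<Rightarrow> real) set" where
  "open_disk n = {d. (\<forall>i\<ge>n. d i = 0) \<and> (\<Sum>i<n. (d i)\<^sup>2) < 1}"

definition disk_boundary :: "nat \<Rightarrow> (nat \<Rightarrow> real) set" where
  "disk_boundary n = {d. (\<forall>i\<ge>n. d i = 0) \<and> (\<Sum>i<n. (d i)\<^sup>2) = 1}"

definition disk_top :: "nat \<Rightarrow> (nat \<Rightarrow> real) topology" where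
  "disk_top n = subtopology (powertop_real UNIV) (disk n)"

text \<open>An equivariant cell T/H x D^n is given by (H, n, phi) with phi : D^n -> X^H continuous;
  its characteristic map is (vH, d) |-> act v (phi d).  The open cell is the image of
  T/H x int(D^n).\<close>
definition open_cell ::
  "(real^'n \<Rightarrow> 'x \<Rightarrow> 'x) \<Rightarrow> (real^'n) set \<times> nat \<times> ((nat \<Rightarrow> real) \<Rightarrow> 'x) \<Rightarrow> 'x set" where
  "open_cell act c = (case c of (H, n, \<phi>) \<Rightarrow> {act v (\<phi> d) | v d. d \<in> open_disk n})"

definition finite_T_CW :: "'x topology \<Rightarrow> (real^'n \<Rightarrow> 'x \<Rightarrow> 'x) \<Rightarrow> bool" where
  "finite_T_CW X act \<longleftrightarrow> torus_space X act \<and> Hausdorff_space X \<and>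
    (\<exists>cells :: ((real^'n) set \<times> nat \<times> ((nat \<Rightarrow> real) \<Rightarrow> 'x)) list.
       (\<forall>(H, n, \<phi>) \<in> set cells.
          closed_subgroup_T H
        \<and> continuous_map (disk_top n) X \<phi>
        \<and> (\<forall>d\<in>disk n. \<forall>h\<in>H. act h (\<phi> d) = \<phi> d)
        \<and> (\<forall>v v' d d'. d \<in> open_disk n \<and> d' \<in> open_disk n \<and> act v (\<phi> d) = act v' (\<phi> d')
              \<longrightarrow> d = d' \<and> v - v' \<in> H)
        \<and> (\<forall>v. \<forall>d\<in>disk_boundary n.
              act v (\<phi> d) \<in> \<Union> {open_cell act c | c. c \<in> set cells \<and> fst (snd c) < n}))
     \<and> (\<forall>i<length cells. \<forall>j<length cells. i \<noteq> j \<longrightarrow>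
              open_cell act (cells ! i) \<inter> open_cell act (cells ! j) = {})
     \<and> topspace X = \<Union> (open_cell act ` set cells))"

text \<open>S^1 is the unit circle in C with basepoint 1 (trivial T-action); X_+ = 'x option with
  basepoint None; S^1 /\ X_+ is modelled on (complex x 'x) option with basepoint None, where
  Some (z, y) (z ~= 1) is the class [z, y].\<close>

definition plus_top :: "'x topology \<Rightarrow> 'x option topology" where
  "plus_top X = topology (\<lambda>U. U \<subseteq> insert None (Some ` topspace X) \<and> openin X (Some -` U))"

definition quotient_top :: "'a topology \<Rightarrow> ('a \<Rightarrow> 'b) \<Rightarrow> 'b topology" where
  "quotient_top X f = topology (\<lambda>U. U \<subseteq> f ` topspace X \<and> openin X {p \<in> topspace X. f p \<in> U})"

definition smash_pt :: "complex \<Rightarrow> 'x option \<Rightarrow> (complex \<times> 'x) option" where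
  "smash_pt z y = (case y of None \<Rightarrow> None | Some p \<Rightarrow> (if z = 1 then None else Some (z, p)))"

definition smash_top :: "'x topology \<Rightarrow> (complex \<times> 'x) option topology" where
  "smash_top X = quotient_top (prod_topology (subtopology euclidean (sphere 0 1)) (plus_top X))
                              (\<lambda>(z, y). smash_pt z y)"

definition smash_act :: "(real^'n \<Rightarrow> 'x \<Rightarrow> 'x) \<Rightarrow> (real^'n) \<Rightarrow> (complex \<times> 'x) option \<Rightarrow> (complex \<times> 'x) option" where
  "smash_act act v = map_option (\<lambda>(z, p). (z, act v p))"

text \<open>L^2 Z = Map(TT^2, Z): continuous maps TT^2 -> Z, represented as continuous
  Z^2-periodic maps R^2 -> Z.\<close>
definition loops2 :: "'z topology \<Rightarrow> (real \<times> real \<Rightarrow> 'z) set" where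
  "loops2 Z = {\<gamma>. continuous_map euclidean Z \<gamma>
                  \<and> (\<forall>s. \<gamma> (s + (1, 0)) = \<gamma> s) \<and> (\<forall>s. \<gamma> (s + (0, 1)) = \<gamma> s)}"

definition loop_act :: "(real^'n \<Rightarrow> 'z \<Rightarrow> 'z) \<Rightarrow> (real \<times> real) \<times> (real^'n) \<Rightarrow> (real \<times> real \<Rightarrow> 'z) \<Rightarrow> (real \<times> real \<Rightarrow> 'z)" where
  "loop_act act g \<gamma> = (\<lambda>s. act (snd g) (\<gamma> (s - fst g)))"

definition lie :: "((real \<times> real) \<times> (real^'n)) set \<Rightarrow> ((real \<times> real) \<times> (real^'n)) set" where
  "lie K = {a. \<forall>s::real. s *\<^sub>R a \<in> K}"

definition complexify :: "(real \<times> real) \<times> (real^'n) \<Rightarrow> (real \<times> real) \<times> (real^'n) \<Rightarrow> (complex \<times> complex) \<times> (complex^'n)" where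
  "complexify a b = ((Complex (fst (fst a)) (fst (fst b)), Complex (snd (fst a)) (snd (fst b))),
                     (\<chi> i. Complex (snd a $ i) (snd b $ i)))"

definition lieC :: "((real \<times> real) \<times> (real^'n)) set \<Rightarrow> ((complex \<times> complex) \<times> (complex^'n)) set" where
  "lieC K = {complexify a b | a b. a \<in> lie K \<and> b \<in> lie K}"

definition Ttx :: "complex \<times> complex \<Rightarrow> (complex^'n) \<Rightarrow> ((real \<times> real) \<times> (real^'n)) set" where
  "Ttx t x = \<Inter> {K. closed_subgroup_G K \<and> (t, x) \<in> lieC K}"

definition fixed_loops :: "'z topology \<Rightarrow> (real^'n \<Rightarrow> 'z \<Rightarrow> 'z) \<Rightarrow> complex \<times> complex \<Rightarrow> (complex^'n)
                            \<Rightarrow> (real \<times> real \<Rightarrow> 'z) set" where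
  "fixed_loops Z act t x = {\<gamma> \<in> loops2 Z. \<forall>g \<in> Ttx t x. loop_act act g \<gamma> = \<gamma>}"

definition Xplus :: "(complex \<times> complex) set" where
  "Xplus = {(t1, t2). {a *\<^sub>R t1 + b *\<^sub>R t2 | a b. True} = UNIV \<and> Im (t1 / t2) > 0}"

end

theory Submission imports Defs begin

text \<open>Since t \<in> Xplus, the real and imaginary parts of t span R^2, so the projection of
  T(t,x) to the loop-rotation torus TT^2 is onto.  A T(t,x)-fixed double loop \<gamma> therefore
  satisfies \<gamma> s = u \<cdot> \<gamma> 0 for some u \<in> T, i.e. it is a single T-orbit traced out from \<gamma> 0.  As T
  acts trivially on S^1, a fixed loop in S^1 \<and> X_+ is either constant at the basepoint or has
  constant S^1-coordinate z \<noteq> 1 and X-coordinate a fixed loop in X.\<close>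

lemma openin_plus_top:
  "openin (plus_top X) U \<longleftrightarrow> U \<subseteq> insert None (Some ` topspace X) \<and> openin X (Some -` U)"
proof -
  have "istopology (\<lambda>U. U \<subseteq> insert None (Some ` topspace X) \<and> openin X (Some -` U))"
    unfolding istopology_def by (auto simp: vimage_Union intro!: openin_Union)
  then show ?thesis unfolding plus_top_def by simp
qed

lemma topspace_plus_top: "topspace (plus_top X) = insert None (Some ` topspace X)"
proof -
  have "Some -` insert None (Some ` topspace X) = topspace X" by auto
  then have "openin (plus_top X) (insert None (Some ` topspace X))"
    by (simp add: openin_plus_top)
  then show ?thesis
    by (metis openin_plus_top openin_subset openin_topspace subset_antisym)
qed

lemma continuous_map_Some_plus_top: "continuous_map X (plus_top X) Some"
  unfolding continuous_map
  by (auto simp: topspace_plus_top openin_plus_top vimage_def openin_subset[THEN subsetD]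
      intro: openin_subopen[THEN iffD2])

lemma openin_quotient_top:
  "openin (quotient_top X f) U \<longleftrightarrow> U \<subseteq> f ` topspace X \<and> openin X {p \<in> topspace X. f p \<in> U}"
proof -
  have "istopology (\<lambda>U. U \<subseteq> f ` topspace X \<and> openin X {p \<in> topspace X. f p \<in> U})"
    unfolding istopology_def
  proof (rule conjI; intro allI impI)
    fix S T
    assume "S \<subseteq> f ` topspace X \<and> openin X {p \<in> topspace X. f p \<in> S}"
      and "T \<subseteq> f ` topspace X \<and> openin X {p \<in> topspace X. f p \<in> T}"
    moreover have "{p \<in> topspace X. f p \<in> S \<inter> T} =
        {p \<in> topspace X. f p \<in> S} \<inter> {p \<in> topspace X. f p \<in> T}" by auto
    ultimately show "S \<inter> T \<subseteq> f ` topspace X \<and> openin X {p \<in> topspace X. f p \<in> S \<inter> T}"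
      by (auto intro: openin_Int)
  next
    fix K assume "\<forall>S\<in>K. S \<subseteq> f ` topspace X \<and> openin X {p \<in> topspace X. f p \<in> S}"
    moreover have "{p \<in> topspace X. f p \<in> \<Union>K} = (\<Union>S\<in>K. {p \<in> topspace X. f p \<in> S})" by auto
    ultimately show "\<Union>K \<subseteq> f ` topspace X \<and> openin X {p \<in> topspace X. f p \<in> \<Union>K}"
      by (auto intro!: openin_Union)
  qed
  then show ?thesis unfolding quotient_top_def by simp
qed

lemma topspace_quotient_top: "topspace (quotient_top X f) = f ` topspace X"
proof -
  have "{p \<in> topspace X. f p \<in> f ` topspace X} = topspace X" by auto
  then have "openin (quotient_top X f) (f ` topspace X)"
    by (simp add: openin_quotient_top)
  then show ?thesis
    by (metis openin_quotient_top openin_subset openin_topspace subset_antisym)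
qed

lemma continuous_map_quotient_top: "continuous_map X (quotient_top X f) f"
  unfolding continuous_map by (auto simp: topspace_quotient_top openin_quotient_top)

lemma topspace_smash_top:
  "topspace (smash_top X) =
     (\<lambda>(z, y). smash_pt z y) ` (sphere 0 1 \<times> insert None (Some ` topspace X))"
  unfolding smash_top_def topspace_quotient_top by (simp add: topspace_plus_top)

lemma None_in_topspace_smash_top: "None \<in> topspace (smash_top X)"
  unfolding topspace_smash_top
  by (rule image_eqI[where x="(1, None)"]) (auto simp: smash_pt_def)

lemma Some_in_topspace_smash_topD:
  assumes "Some (z, q) \<in> topspace (smash_top X)"
  shows "z \<in> sphere 0 1" and "z \<noteq> 1" and "q \<in> topspace X"
  using assms unfolding topspace_smash_top
  by (auto simp: smash_pt_def split: option.splits if_splits)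

lemma smash_act_Some: "smash_act act u (Some (z, q)) = Some (z, act u q)"
  by (simp add: smash_act_def)

lemma smash_act_smash_pt: "smash_act act u (smash_pt z (Some q)) = smash_pt z (Some (act u q))"
  by (simp add: smash_pt_def smash_act_def)

lemma openin_smash_top_Some:
  assumes U: "openin X U"
  shows "openin (smash_top X) (Some ` ((sphere 0 1 - {1}) \<times> U))"
proof -
  let ?Y = "prod_topology (subtopology euclidean (sphere (0::complex) 1)) (plus_top X)"
  let ?V = "Some ` ((sphere (0::complex) 1 - {1}) \<times> U)"
  have U_sub: "U \<subseteq> topspace X" using openin_subset[OF U] .
  have "openin (subtopology euclidean (sphere (0::complex) 1)) (sphere 0 1 \<inter> - {1})"
    by (simp add: openin_open_Int open_Compl)
  moreover have "openin (plus_top X) (Some ` U)"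
    using U U_sub by (auto simp: openin_plus_top inj_vimage_image_eq)
  ultimately have "openin ?Y ((sphere 0 1 - {1}) \<times> Some ` U)"
    by (simp add: openin_prod_Times_iff Diff_eq)
  moreover have "{p \<in> topspace ?Y. (\<lambda>(z, y). smash_pt z y) p \<in> ?V} = (sphere 0 1 - {1}) \<times> Some ` U"
  proof (rule set_eqI)
    fix p :: "complex \<times> 'a option"
    obtain w y where p: "p = (w, y)" by (cases p)
    show "p \<in> {p \<in> topspace ?Y. (\<lambda>(z, y). smash_pt z y) p \<in> ?V} \<longleftrightarrow> p \<in> (sphere 0 1 - {1}) \<times> Some ` U"
      using U_sub unfolding p by (cases y) (auto simp: smash_pt_def topspace_plus_top)
  qed
  moreover have "?V \<subseteq> (\<lambda>(z, y). smash_pt z y) ` topspace ?Y"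
  proof (rule subsetI)
    fix v assume "v \<in> ?V"
    then obtain w q where "v = Some (w, q)" "w \<in> sphere 0 1 - {1}" "q \<in> U" by blast
    with U_sub show "v \<in> (\<lambda>(z, y). smash_pt z y) ` topspace ?Y"
      by (intro image_eqI[where x="(w, Some q)"]) (auto simp: smash_pt_def topspace_plus_top)
  qed
  ultimately show ?thesis unfolding smash_top_def openin_quotient_top by simp
qed

lemma continuous_map_smash_pt_Some:
  assumes "continuous_map W X \<delta>" and "z \<in> sphere 0 1"
  shows "continuous_map W (smash_top X) (\<lambda>s. smash_pt z (Some (\<delta> s)))"
proof -
  have "continuous_map W (prod_topology (subtopology euclidean (sphere 0 1)) (plus_top X))
          (\<lambda>s. (z, Some (\<delta> s)))"
    using assms continuous_map_compose[OF assms(1) continuous_map_Some_plus_top]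
    by (auto intro!: continuous_map_pairedI simp: o_def)
  from continuous_map_compose[OF this continuous_map_quotient_top[of _ "\<lambda>(z, y). smash_pt z y"]]
  show ?thesis unfolding smash_top_def o_def by simp
qed

lemma continuous_map_smash_top_SomeD:
  assumes \<delta>: "continuous_map W (smash_top X) (\<lambda>s. Some (z, \<delta> s))"
  shows "continuous_map W X \<delta>"
  unfolding continuous_map
proof (intro conjI allI impI)
  have "Some (z, \<delta> s) \<in> topspace (smash_top X)" if "s \<in> topspace W" for s
    using \<delta> that by (rule continuous_map_image_subset_topspace[THEN subsetD, OF _ imageI])
  note in_topspace = Some_in_topspace_smash_topD[OF this]
  show "\<delta> ` topspace W \<subseteq> topspace X"
    using in_topspace(3) by blast
  fix U assume U: "openin X U"
  have "openin W {s \<in> topspace W. Some (z, \<delta> s) \<in> Some ` ((sphere 0 1 - {1}) \<times> U)}"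
    using \<delta> openin_smash_top_Some[OF U] unfolding continuous_map by blast
  moreover have "{s \<in> topspace W. Some (z, \<delta> s) \<in> Some ` ((sphere 0 1 - {1}) \<times> U)}
      = {s \<in> topspace W. \<delta> s \<in> U}"
    using in_topspace(1,2) by blast
  ultimately show "openin W {s \<in> topspace W. \<delta> s \<in> U}" by simp
qed

lemma complexify_Re_Im:
  "complexify ((Re t1, Re t2), \<chi> i. Re (x $ i)) ((Im t1, Im t2), \<chi> i. Im (x $ i)) = ((t1, t2), x)"
  by (simp add: complexify_def vec_eq_iff)

lemma complexify_inject: "complexify a b = complexify a' b' \<longleftrightarrow> a = a' \<and> b = b'"
  by (auto simp: complexify_def vec_eq_iff prod_eq_iff)

lemma lie_combination_in:
  assumes "closed_subgroup_G K" and "a \<in> lie K" and "b \<in> lie K"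
  shows "\<alpha> *\<^sub>R a + \<beta> *\<^sub>R b \<in> K"
proof -
  have "\<alpha> *\<^sub>R a - (- \<beta>) *\<^sub>R b \<in> K"
    using assms unfolding closed_subgroup_G_def lie_def by blast
  then show ?thesis by simp
qed

lemma real_combination_Re_Im:
  assumes "Im (t1 / t2) > 0"
  shows "\<exists>\<alpha> \<beta>. \<alpha> *\<^sub>R (Re t1, Re t2) + \<beta> *\<^sub>R (Im t1, Im t2) = (r1, r2)"
proof -
  define D where "D = Re t1 * Im t2 - Im t1 * Re t2"
  have "D \<noteq> 0" using assms unfolding D_def Im_divide by (auto simp: field_simps)
  \<comment> \<open>Cramer's rule\<close>
  define \<alpha> where "\<alpha> = (r1 * Im t2 - r2 * Im t1) / D"
  define \<beta> where "\<beta> = (Re t1 * r2 - Re t2 * r1) / D"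
  have "\<alpha> * Re t1 + \<beta> * Im t1 = (r1 * D) / D"
    unfolding \<alpha>_def \<beta>_def D_def by (simp add: add_divide_distrib[symmetric] algebra_simps)
  moreover have "\<alpha> * Re t2 + \<beta> * Im t2 = (r2 * D) / D"
    unfolding \<alpha>_def \<beta>_def D_def by (simp add: add_divide_distrib[symmetric] algebra_simps)
  ultimately have "\<alpha> * Re t1 + \<beta> * Im t1 = r1" and "\<alpha> * Re t2 + \<beta> * Im t2 = r2"
    using \<open>D \<noteq> 0\<close> by simp_all
  then show ?thesis by (intro exI[of _ \<alpha>] exI[of _ \<beta>]) simp
qed

lemma Ttx_projects_onto:
  fixes x :: "complex^'n"
  assumes "Im (fst t / snd t) > 0"
  shows "\<exists>u. (r, u) \<in> Ttx t x"
proof -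
  obtain t1 t2 where t: "t = (t1, t2)" by (cases t)
  obtain r1 r2 where r: "r = (r1, r2)" by (cases r)
  define a :: "(real \<times> real) \<times> (real^'n)" where "a = ((Re t1, Re t2), \<chi> i. Re (x $ i))"
  define b :: "(real \<times> real) \<times> (real^'n)" where "b = ((Im t1, Im t2), \<chi> i. Im (x $ i))"
  have "Im (t1 / t2) > 0" using assms t by simp
  then obtain \<alpha> \<beta> where \<alpha>\<beta>: "\<alpha> *\<^sub>R (Re t1, Re t2) + \<beta> *\<^sub>R (Im t1, Im t2) = (r1, r2)"
    using real_combination_Re_Im by blast
  have "\<alpha> *\<^sub>R a + \<beta> *\<^sub>R b \<in> K" if K: "closed_subgroup_G K" "(t, x) \<in> lieC K" for K
  proof -
    obtain a' b' where ab': "(t, x) = complexify a' b'" "a' \<in> lie K" "b' \<in> lie K"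
      using K(2) unfolding lieC_def by blast
    have "complexify a b = complexify a' b'"
      unfolding ab'(1)[symmetric] a_def b_def t by (rule complexify_Re_Im)
    then have "a = a'" and "b = b'" by (simp_all only: complexify_inject)
    then have "a \<in> lie K" and "b \<in> lie K" using ab'(2,3) by simp_all
    then show ?thesis using lie_combination_in K(1) by blast
  qed
  then have "\<alpha> *\<^sub>R a + \<beta> *\<^sub>R b \<in> Ttx t x" unfolding Ttx_def by blast
  moreover have "fst (\<alpha> *\<^sub>R a + \<beta> *\<^sub>R b) = r" using \<alpha>\<beta> unfolding a_def b_def r by simp
  ultimately have "(r, snd (\<alpha> *\<^sub>R a + \<beta> *\<^sub>R b)) \<in> Ttx t x" by (metis prod.collapse)
  then show ?thesis ..
qed

lemma fixed_loops_iff: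
  "\<gamma> \<in> fixed_loops Z act t x \<longleftrightarrow>
     continuous_map euclidean Z \<gamma> \<and> (\<forall>s. \<gamma> (s + (1, 0)) = \<gamma> s) \<and> (\<forall>s. \<gamma> (s + (0, 1)) = \<gamma> s)
     \<and> (\<forall>g\<in>Ttx t x. \<forall>s. act (snd g) (\<gamma> (s - fst g)) = \<gamma> s)"
  unfolding fixed_loops_def loops2_def loop_act_def mem_Collect_eq fun_eq_iff conj_assoc ..

lemma fixed_loops_orbit:
  assumes "\<gamma> \<in> fixed_loops Z act t x" and "\<And>r. \<exists>u. (r, u) \<in> Ttx t x"
  shows "\<exists>u. \<gamma> s = act u (\<gamma> 0)"
proof -
  obtain u where "(s, u) \<in> Ttx t x" using assms(2) by blast
  then have "loop_act act (s, u) \<gamma> s = \<gamma> s"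
    using assms(1) unfolding fixed_loops_def by simp
  then have "\<gamma> s = act u (\<gamma> 0)" unfolding loop_act_def by simp
  then show ?thesis ..
qed

lemma const_None_in_fixed_loops_smash: "(\<lambda>s. None) \<in> fixed_loops (smash_top X) (smash_act act) t x"
  unfolding fixed_loops_def loops2_def
  by (simp add: continuous_map_const None_in_topspace_smash_top loop_act_def smash_act_def)

lemma smash_pt_fixed_loop_in_fixed_loops_smash:
  assumes z: "z \<in> sphere 0 1" and \<delta>: "\<delta> \<in> fixed_loops X act t x"
  shows "(\<lambda>s. smash_pt z (Some (\<delta> s))) \<in> fixed_loops (smash_top X) (smash_act act) t x"
proof -
  have \<delta>_cont: "continuous_map euclidean X \<delta>"
    and \<delta>_periodic: "\<forall>s. \<delta> (s + (1, 0)) = \<delta> s" "\<forall>s. \<delta> (s + (0, 1)) = \<delta> s"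
    and \<delta>_fixed: "\<forall>g\<in>Ttx t x. \<forall>s. act (snd g) (\<delta> (s - fst g)) = \<delta> s"
    using \<delta> unfolding fixed_loops_iff by blast+
  have "continuous_map euclidean (smash_top X) (\<lambda>s. smash_pt z (Some (\<delta> s)))"
    using \<delta>_cont z by (rule continuous_map_smash_pt_Some)
  moreover have "\<forall>s. smash_pt z (Some (\<delta> (s + (1, 0)))) = smash_pt z (Some (\<delta> s))"
    and "\<forall>s. smash_pt z (Some (\<delta> (s + (0, 1)))) = smash_pt z (Some (\<delta> s))"
    using \<delta>_periodic by (simp_all del: split_paired_All)
  moreover have "\<forall>g\<in>Ttx t x. \<forall>s.
      smash_act act (snd g) (smash_pt z (Some (\<delta> (s - fst g)))) = smash_pt z (Some (\<delta> s))"
    using \<delta>_fixed by (simp add: smash_act_smash_pt)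
  ultimately show ?thesis unfolding fixed_loops_iff by blast
qed

lemma fixed_loops_smash_cases:
  assumes \<gamma>: "\<gamma> \<in> fixed_loops (smash_top X) (smash_act act) t x"
    and onto: "\<And>r. \<exists>u. (r, u) \<in> Ttx t x"
  obtains "\<gamma> = (\<lambda>s. None)"
  | z \<delta> where "z \<in> sphere 0 1" and "\<delta> \<in> fixed_loops X act t x"
      and "\<gamma> = (\<lambda>s. smash_pt z (Some (\<delta> s)))"
proof (cases "\<gamma> 0")
  case None
  have "\<gamma> = (\<lambda>s. None)"
  proof
    fix s
    obtain u where "\<gamma> s = smash_act act u (\<gamma> 0)" using fixed_loops_orbit[OF \<gamma> onto] by blast
    then show "\<gamma> s = None" using None by (simp add: smash_act_def)
  qed
  then show ?thesis by (rule that(1))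
next
  case (Some zq)
  then obtain z q where \<gamma>0: "\<gamma> 0 = Some (z, q)" by (cases zq) auto
  have \<gamma>_cont: "continuous_map euclidean (smash_top X) \<gamma>"
    and \<gamma>_periodic: "\<forall>s. \<gamma> (s + (1, 0)) = \<gamma> s" "\<forall>s. \<gamma> (s + (0, 1)) = \<gamma> s"
    and \<gamma>_fixed: "\<forall>g\<in>Ttx t x. \<forall>s. smash_act act (snd g) (\<gamma> (s - fst g)) = \<gamma> s"
    using \<gamma> unfolding fixed_loops_iff by blast+
  have "\<gamma> 0 \<in> topspace (smash_top X)"
    using continuous_map_image_subset_topspace[OF \<gamma>_cont] by auto
  then have z: "z \<in> sphere 0 1" "z \<noteq> 1"
    unfolding \<gamma>0 by (blast dest: Some_in_topspace_smash_topD)+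
  define \<delta> where "\<delta> = (\<lambda>s. snd (the (\<gamma> s)))"
  have \<gamma>_eq: "\<gamma> s = Some (z, \<delta> s)" for s
  proof -
    obtain u where "\<gamma> s = smash_act act u (\<gamma> 0)" using fixed_loops_orbit[OF \<gamma> onto] by blast
    then show ?thesis unfolding \<delta>_def \<gamma>0 smash_act_Some by simp
  qed
  then have "\<gamma> = (\<lambda>s. Some (z, \<delta> s))" by (rule ext)
  with \<gamma>_cont have \<delta>_cont: "continuous_map euclidean X \<delta>"
    by (simp add: continuous_map_smash_top_SomeD)
  have \<delta>_periodic: "\<forall>s. \<delta> (s + (1, 0)) = \<delta> s" "\<forall>s. \<delta> (s + (0, 1)) = \<delta> s"
    using \<gamma>_periodic unfolding \<gamma>_eq by (simp_all del: split_paired_All)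
  have \<delta>_fixed: "\<forall>g\<in>Ttx t x. \<forall>s. act (snd g) (\<delta> (s - fst g)) = \<delta> s"
    using \<gamma>_fixed unfolding \<gamma>_eq smash_act_Some by simp
  have "\<delta> \<in> fixed_loops X act t x"
    unfolding fixed_loops_iff using \<delta>_cont \<delta>_periodic \<delta>_fixed by blast
  moreover have "\<gamma> = (\<lambda>s. smash_pt z (Some (\<delta> s)))"
    using z(2) by (simp add: fun_eq_iff \<gamma>_eq smash_pt_def)
  ultimately show ?thesis using z(1) by (intro that(2))
qed

theorem mainTheorem17:
  fixes X :: "'x topology" and act :: "real^'n \<Rightarrow> 'x \<Rightarrow> 'x"
    and t :: "complex \<times> complex" and x :: "complex^'n"
  assumes "finite_T_CW X act"
    and "t \<in> Xplus"
  shows "fixed_loops (smash_top X) (smash_act act) t x =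
           insert (\<lambda>s. None)
             ((\<lambda>(z, \<gamma>). \<lambda>s. smash_pt z (Some (\<gamma> s))) ` (sphere 0 1 \<times> fixed_loops X act t x))"
proof -
  have "Im (fst t / snd t) > 0" using assms(2) unfolding Xplus_def by (cases t) auto
  then have onto: "\<And>r. \<exists>u. (r, u) \<in> Ttx t x" by (rule Ttx_projects_onto)
  show ?thesis
  proof (intro equalityI subsetI)
    fix \<gamma> assume \<gamma>: "\<gamma> \<in> fixed_loops (smash_top X) (smash_act act) t x"
    show "\<gamma> \<in> insert (\<lambda>s. None)
        ((\<lambda>(z, \<gamma>). \<lambda>s. smash_pt z (Some (\<gamma> s))) ` (sphere 0 1 \<times> fixed_loops X act t x))"
    proof (rule fixed_loops_smash_cases[OF \<gamma> onto])
      assume "\<gamma> = (\<lambda>s. None)"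
      then show ?thesis by simp
    next
      fix z \<delta>
      assume "z \<in> sphere 0 1" "\<delta> \<in> fixed_loops X act t x" "\<gamma> = (\<lambda>s. smash_pt z (Some (\<delta> s)))"
      then show ?thesis by (intro insertI2 image_eqI[where x="(z, \<delta>)"]) simp_all
    qed
  next
    fix \<gamma> assume "\<gamma> \<in> insert (\<lambda>s. None)
        ((\<lambda>(z, \<gamma>). \<lambda>s. smash_pt z (Some (\<gamma> s))) ` (sphere 0 1 \<times> fixed_loops X act t x))"
    then show "\<gamma> \<in> fixed_loops (smash_top X) (smash_act act) t x"
      by (elim insertE imageE SigmaE)
        (simp_all add: const_None_in_fixed_loops_smash smash_pt_fixed_loop_in_fixed_loops_smash)
  qed
qed

end
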